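(* A $k$-layer partially input convex neural network (PICNN), as defined below, can represent any $k$-layer fully input convex neural network (FICNN), and any purely feedforward network with $k$ layers (the latter viewed as the energy function $(x,y)\mapsto \hat f(x;\theta)^T y$).
   Context: A $k$-layer FICNN over $y\in\mathbb{R}^p$ is $f(y;\theta)=z_k$ where $z_{i+1} = g_i(W^{(z)}_i z_i + W^{(y)}_i y + b_i)$ for $i=0,\ldots,k-1$, with $z_0 \equiv 0$, $W^{(z)}_0\equiv 0$, $W^{(z)}_{1:k-1}$ entrywise non-negative and $g_i$ convex non-decreasing activations. A $k$-layer PICNN over pairs $(x,y)$ is $f(x,y;\theta)=z_k$ defined by $u_0 = x$, $$u_{i+1} = \tilde g_i(\tilde W_i u_i + \tilde b_i),$$ $$z_{i+1} = g_i\Big( W^{(z)}_i\big(z_i \circ [W^{(zu)}_i u_i + b^{(z)}_i]_+\big) + W^{(y)}_i\big(y\circ(W^{(yu)}_i u_i + b^{(y)}_i)\big) + W^{(u)}_i u_i + b_i\Big),$$ for $i=0,\ldots,k-1$, where $\circ$ is the elementwise (Hadamard) product, $[\cdot]_+ = \max(\cdot,0)$ elementwise, only the $W^{(z)}_i$ are required to be entrywise non-negative, $g_i$ are convex non-decreasing activations, and $\tilde g_i$ are arbitrary activations. A purely feedforward network $\hat f: \mathcal{X}\to\mathcal{Y}$ with $k$ layers is identified with the energy function $f(x,y) = \hat f(x;\theta)^T y$. "Can represent" means there exist PICNN parameters such that the PICNN function coincides with the given function. *)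

theory Defs
  imports "HOL-Analysis.Analysis"
begin

text \<open>Vectors are functions nat => real whose relevant components are those below an
explicit dimension; a matrix W of size m x n is a function nat => nat => real
of which only the entries W i j with i < m, j < n are relevant.\<close>

definition mv :: "nat \<Rightarrow> (nat \<Rightarrow> nat \<Rightarrow> real) \<Rightarrow> (nat \<Rightarrow> real) \<Rightarrow> (nat \<Rightarrow> real)" where
  "mv n W v = (\<lambda>i. \<Sum>j<n. W i j * v j)"

record ficnn =
  f_layers :: nat
  f_ydim :: nat
  f_width :: "nat \<Rightarrow> nat"
  f_Wz :: "nat \<Rightarrow> nat \<Rightarrow> nat \<Rightarrow> real"
  f_Wy :: "nat \<Rightarrow> nat \<Rightarrow> nat \<Rightarrow> real"
  f_b :: "nat \<Rightarrow> nat \<Rightarrow> real"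
  f_g :: "nat \<Rightarrow> real \<Rightarrow> real"

fun ficnn_z :: "ficnn \<Rightarrow> (nat \<Rightarrow> real) \<Rightarrow> nat \<Rightarrow> (nat \<Rightarrow> real)" where
  "ficnn_z N y 0 = (\<lambda>_. 0)"
| "ficnn_z N y (Suc i) =
     (\<lambda>j. f_g N i (mv (f_width N i) (f_Wz N i) (ficnn_z N y i) j
                   + mv (f_ydim N) (f_Wy N i) y j + f_b N i j))"

definition ficnn_wf :: "ficnn \<Rightarrow> bool" where
  "ficnn_wf N \<longleftrightarrow>
     (\<forall>j l. f_Wz N 0 j l = 0) \<and>
     (\<forall>i. 1 \<le> i \<and> i < f_layers N \<longrightarrow>
        (\<forall>j < f_width N (Suc i). \<forall>l < f_width N i. f_Wz N i j l \<ge> 0)) \<and>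
     (\<forall>i < f_layers N. convex_on UNIV (f_g N i) \<and> mono (f_g N i))"

definition ficnn_out :: "ficnn \<Rightarrow> (nat \<Rightarrow> real) \<Rightarrow> (nat \<Rightarrow> real)" where
  "ficnn_out N y = ficnn_z N y (f_layers N)"

record picnn =
  p_layers :: nat
  p_ydim :: nat
  p_uwidth :: "nat \<Rightarrow> nat"
  p_zwidth :: "nat \<Rightarrow> nat"
  p_Wt :: "nat \<Rightarrow> nat \<Rightarrow> nat \<Rightarrow> real"
  p_bt :: "nat \<Rightarrow> nat \<Rightarrow> real"
  p_gt :: "nat \<Rightarrow> real \<Rightarrow> real"
  p_Wz :: "nat \<Rightarrow> nat \<Rightarrow> nat \<Rightarrow> real"
  p_Wzu :: "nat \<Rightarrow> nat \<Rightarrow> nat \<Rightarrow> real"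
  p_bz :: "nat \<Rightarrow> nat \<Rightarrow> real"
  p_Wy :: "nat \<Rightarrow> nat \<Rightarrow> nat \<Rightarrow> real"
  p_Wyu :: "nat \<Rightarrow> nat \<Rightarrow> nat \<Rightarrow> real"
  p_by :: "nat \<Rightarrow> nat \<Rightarrow> real"
  p_Wu :: "nat \<Rightarrow> nat \<Rightarrow> nat \<Rightarrow> real"
  p_b :: "nat \<Rightarrow> nat \<Rightarrow> real"
  p_g :: "nat \<Rightarrow> real \<Rightarrow> real"

fun picnn_u :: "picnn \<Rightarrow> (nat \<Rightarrow> real) \<Rightarrow> nat \<Rightarrow> (nat \<Rightarrow> real)" where
  "picnn_u P x 0 = x"
| "picnn_u P x (Suc i) =
     (\<lambda>j. p_gt P i (mv (p_uwidth P i) (p_Wt P i) (picnn_u P x i) j + p_bt P i j))"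

fun picnn_z :: "picnn \<Rightarrow> (nat \<Rightarrow> real) \<Rightarrow> (nat \<Rightarrow> real) \<Rightarrow> nat \<Rightarrow> (nat \<Rightarrow> real)" where
  "picnn_z P x y 0 = (\<lambda>_. 0)"
| "picnn_z P x y (Suc i) =
     (let u = picnn_u P x i; z = picnn_z P x y i;
          zu = (\<lambda>l. z l * max 0 (mv (p_uwidth P i) (p_Wzu P i) u l + p_bz P i l));
          yu = (\<lambda>l. y l * (mv (p_uwidth P i) (p_Wyu P i) u l + p_by P i l))
      in (\<lambda>j. p_g P i (mv (p_zwidth P i) (p_Wz P i) zu j
                       + mv (p_ydim P) (p_Wy P i) yu j
                       + mv (p_uwidth P i) (p_Wu P i) u j + p_b P i j)))"

definition picnn_wf :: "picnn \<Rightarrow> bool" where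
  "picnn_wf P \<longleftrightarrow>
     (\<forall>i < p_layers P.
        (\<forall>j < p_zwidth P (Suc i). \<forall>l < p_zwidth P i. p_Wz P i j l \<ge> 0)) \<and>
     (\<forall>i < p_layers P. convex_on UNIV (p_g P i) \<and> mono (p_g P i))"

definition picnn_out :: "picnn \<Rightarrow> (nat \<Rightarrow> real) \<Rightarrow> (nat \<Rightarrow> real) \<Rightarrow> (nat \<Rightarrow> real)" where
  "picnn_out P x y = picnn_z P x y (p_layers P)"

text \<open>k layers: hidden layers i < k - 1 apply an arbitrary activation elementwise,
the final (k-th) layer is affine (output layer). Input dim ff_width 0,
output dim ff_width k.\<close>

record ffnet =
  ff_layers :: nat
  ff_width :: "nat \<Rightarrow> nat"
  ff_W :: "nat \<Rightarrow> nat \<Rightarrow> nat \<Rightarrow> real"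
  ff_bias :: "nat \<Rightarrow> nat \<Rightarrow> real"
  ff_act :: "nat \<Rightarrow> real \<Rightarrow> real"

fun ff_h :: "ffnet \<Rightarrow> (nat \<Rightarrow> real) \<Rightarrow> nat \<Rightarrow> (nat \<Rightarrow> real)" where
  "ff_h F x 0 = x"
| "ff_h F x (Suc i) =
     (\<lambda>j. (if Suc i < ff_layers F then ff_act F i else id)
            (mv (ff_width F i) (ff_W F i) (ff_h F x i) j + ff_bias F i j))"

definition ff_out :: "ffnet \<Rightarrow> (nat \<Rightarrow> real) \<Rightarrow> (nat \<Rightarrow> real)" where
  "ff_out F x = ff_h F x (ff_layers F)"

end

theory Submission
  imports Defs
begin

text \<open>A FICNN is obtained by switching off the x-path:
with all x-dependent weights zero and the gating biases equal to 1, the factors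
[W^(zu) u + b^(z)]_+ and W^(yu) u + b^(y) are constantly 1, so the Hadamard products
disappear and the z-recursion of the PICNN is literally that of the FICNN. A feedforward
network is obtained the other way round: the u-path copies its hidden layers, the y-gate of
the last layer computes its affine output layer, so the last z-unit sums the entries of
y \<circ> f(x) with all-ones weights, while the z-path itself is switched off (W^(z) = 0, which
is trivially non-negative).\<close>

definition picnn_of_ficnn :: "ficnn \<Rightarrow> nat \<Rightarrow> picnn" where
  "picnn_of_ficnn N n = \<lparr> p_layers = f_layers N, p_ydim = f_ydim N, p_uwidth = (\<lambda>_. n),
     p_zwidth = f_width N, p_Wt = (\<lambda>_ _ _. 0), p_bt = (\<lambda>_ _. 0), p_gt = (\<lambda>_ t. t),
     p_Wz = f_Wz N, p_Wzu = (\<lambda>_ _ _. 0), p_bz = (\<lambda>_ _. 1),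
     p_Wy = f_Wy N, p_Wyu = (\<lambda>_ _ _. 0), p_by = (\<lambda>_ _. 1),
     p_Wu = (\<lambda>_ _ _. 0), p_b = f_b N, p_g = f_g N \<rparr>"

lemma picnn_z_picnn_of_ficnn: "picnn_z (picnn_of_ficnn N n) x y i = ficnn_z N y i"
  by (induction i) (simp_all add: picnn_of_ficnn_def Let_def mv_def)

lemma picnn_out_picnn_of_ficnn: "picnn_out (picnn_of_ficnn N n) x y = ficnn_out N y"
  using picnn_z_picnn_of_ficnn[of N n x y "f_layers N"]
  by (simp add: picnn_out_def ficnn_out_def picnn_of_ficnn_def)

lemma picnn_wf_picnn_of_ficnn:
  assumes "ficnn_wf N"
  shows "picnn_wf (picnn_of_ficnn N n)"
proof -
  have "0 \<le> f_Wz N i j l"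
    if "i < f_layers N" "j < f_width N (Suc i)" "l < f_width N i" for i j l
    using assms that by (cases "i = 0") (simp_all add: ficnn_wf_def)
  then show ?thesis
    using assms by (simp add: picnn_wf_def ficnn_wf_def picnn_of_ficnn_def)
qed

definition picnn_of_ffnet :: "ffnet \<Rightarrow> picnn" where
  "picnn_of_ffnet F = \<lparr> p_layers = ff_layers F, p_ydim = ff_width F (ff_layers F),
     p_uwidth = ff_width F, p_zwidth = (\<lambda>_. 1),
     p_Wt = ff_W F, p_bt = ff_bias F, p_gt = ff_act F,
     p_Wz = (\<lambda>_ _ _. 0), p_Wzu = (\<lambda>_ _ _. 0), p_bz = (\<lambda>_ _. 0),
     p_Wy = (\<lambda>_ _ _. 1), p_Wyu = ff_W F, p_by = ff_bias F,
     p_Wu = (\<lambda>_ _ _. 0), p_b = (\<lambda>_ _. 0), p_g = (\<lambda>_ t. t) \<rparr>"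

text \<open>Only up to the last hidden layer: u_k applies the activation where the
feedforward output layer is affine.\<close>

lemma picnn_u_picnn_of_ffnet: "i < ff_layers F \<Longrightarrow> picnn_u (picnn_of_ffnet F) x i = ff_h F x i"
  by (induction i) (simp_all add: picnn_of_ffnet_def mv_def)

lemma picnn_wf_picnn_of_ffnet: "picnn_wf (picnn_of_ffnet F)"
  by (simp add: picnn_wf_def picnn_of_ffnet_def convex_on_ident mono_def)

lemma picnn_out_picnn_of_ffnet:
  assumes "ff_layers F \<ge> 1"
  shows "picnn_out (picnn_of_ffnet F) x y 0 = (\<Sum>j < ff_width F (ff_layers F). ff_out F x j * y j)"
proof -
  obtain m where m: "ff_layers F = Suc m"
    using assms by (cases "ff_layers F") auto
  have "picnn_u (picnn_of_ffnet F) x m = ff_h F x m"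
    using m by (intro picnn_u_picnn_of_ffnet) simp
  then show ?thesis
    using m by (simp add: picnn_out_def ff_out_def Let_def mv_def picnn_of_ffnet_def mult.commute)
qed

theorem proposition2:
  shows "(\<forall>N n. ficnn_wf N \<longrightarrow>
            (\<exists>P. picnn_wf P \<and> p_layers P = f_layers N \<and> p_uwidth P 0 = n \<and>
                 p_ydim P = f_ydim N \<and> p_zwidth P (p_layers P) = f_width N (f_layers N) \<and>
                 (\<forall>x y. \<forall>j < f_width N (f_layers N). picnn_out P x y j = ficnn_out N y j)))
       \<and> (\<forall>F. ff_layers F \<ge> 1 \<longrightarrow>
            (\<exists>P. picnn_wf P \<and> p_layers P = ff_layers F \<and> p_uwidth P 0 = ff_width F 0 \<and>
                 p_ydim P = ff_width F (ff_layers F) \<and> p_zwidth P (p_layers P) = 1 \<and>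
                 (\<forall>x y. picnn_out P x y 0 =
                        (\<Sum>j < ff_width F (ff_layers F). ff_out F x j * y j))))"
proof (intro conjI allI impI)
  fix N :: ficnn and n :: nat
  assume "ficnn_wf N"
  then show "\<exists>P. picnn_wf P \<and> p_layers P = f_layers N \<and> p_uwidth P 0 = n \<and>
      p_ydim P = f_ydim N \<and> p_zwidth P (p_layers P) = f_width N (f_layers N) \<and>
      (\<forall>x y. \<forall>j < f_width N (f_layers N). picnn_out P x y j = ficnn_out N y j)"
    using picnn_wf_picnn_of_ficnn picnn_out_picnn_of_ficnn
    by (intro exI[of _ "picnn_of_ficnn N n"]) (simp add: picnn_of_ficnn_def)
next
  fix F :: ffnet
  assume "ff_layers F \<ge> 1"
  then show "\<exists>P. picnn_wf P \<and> p_layers P = ff_layers F \<and> p_uwidth P 0 = ff_width F 0 \<and>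
      p_ydim P = ff_width F (ff_layers F) \<and> p_zwidth P (p_layers P) = 1 \<and>
      (\<forall>x y. picnn_out P x y 0 = (\<Sum>j < ff_width F (ff_layers F). ff_out F x j * y j))"
    using picnn_wf_picnn_of_ffnet picnn_out_picnn_of_ffnet
    by (intro exI[of _ "picnn_of_ffnet F"]) (simp add: picnn_of_ffnet_def)
qed

end
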